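(* Let $M$ be a connected matroid on $E$, and let $\mathfrak{S}\subseteq\mathcal{P}(E)$ be a collection such that (i) $\mathfrak{S}$ contains every set $S\subseteq E$ for which both $M|_S$ and $M/S$ are connected, and (ii) whenever $S\in\mathfrak{S}$, every connected component of $M|_S$ is also in $\mathfrak{S}$. Then $\mathrm{ec}_{\mathfrak{S}}(M)=\mathrm{ec}(M)$.
   Context: $M$ has rank $k$. A matroid is connected if it is not a direct sum of two matroids on nonempty sets; its connected components are the ground sets of the connected summands in its decomposition into connected matroids. $M|_S$ is the restriction and $M/S$ the contraction (on $E-S$, with $\mathrm{rk}_{M/S}(A)=\mathrm{rk}(A\cup S)-\mathrm{rk}(S)$). For $\mathfrak{S}\subseteq\mathcal{P}(E)$ and $S\in\mathfrak{S}$, $c(S)=\#S-\mathrm{rk}\,S$, $a_{\mathfrak{S}}(S)=c(S)-\sum_{T\in\mathfrak{S},\,T\subsetneq S}a_{\mathfrak{S}}(T)$ (recursively, $a_{\mathfrak{S}}(\varnothing)=0$), $\mathrm{ec}_{\mathfrak{S}}(M)=\sum_{S\in\mathfrak{S}}(k-\mathrm{rk}\,S)a_{\mathfrak{S}}(S)$, and $\mathrm{ec}(M)=\mathrm{ec}_{\mathcal{P}(E)}(M)$. *)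

theory Defs
  imports Main
begin

text \<open>A matroid on a finite ground set E, given by its rank function rk
  (only its values on subsets of E matter); standard rank axioms.\<close>
definition matroid :: "'a set \<Rightarrow> ('a set \<Rightarrow> nat) \<Rightarrow> bool" where
  "matroid E rk \<longleftrightarrow> finite E
     \<and> (\<forall>A. A \<subseteq> E \<longrightarrow> rk A \<le> card A)
     \<and> (\<forall>A B. A \<subseteq> B \<and> B \<subseteq> E \<longrightarrow> rk A \<le> rk B)
     \<and> (\<forall>A B. A \<subseteq> E \<and> B \<subseteq> E \<longrightarrow> rk (A \<union> B) + rk (A \<inter> B) \<le> rk A + rk B)"

text \<open>Restriction M|S has ground set S and rank rk; contraction M/S has ground set E - S.\<close>
definition contr_rk :: "('a set \<Rightarrow> nat) \<Rightarrow> 'a set \<Rightarrow> 'a set \<Rightarrow> nat" where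
  "contr_rk rk S A = rk (A \<union> S) - rk S"

definition direct_sum_decomp :: "'a set \<Rightarrow> ('a set \<Rightarrow> nat) \<Rightarrow> 'a set set \<Rightarrow> bool" where
  "direct_sum_decomp E rk P \<longleftrightarrow> (\<Union>P = E) \<and> (\<forall>B\<in>P. B \<noteq> {})
     \<and> (\<forall>B\<in>P. \<forall>B'\<in>P. B \<noteq> B' \<longrightarrow> B \<inter> B' = {})
     \<and> (\<forall>X. X \<subseteq> E \<longrightarrow> rk X = (\<Sum>B\<in>P. rk (X \<inter> B)))"

definition connected_matroid :: "'a set \<Rightarrow> ('a set \<Rightarrow> nat) \<Rightarrow> bool" where
  "connected_matroid E rk \<longleftrightarrow>
     \<not> (\<exists>A B. A \<noteq> {} \<and> B \<noteq> {} \<and> A \<inter> B = {} \<and> A \<union> B = E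
             \<and> (\<forall>X. X \<subseteq> E \<longrightarrow> rk X = rk (X \<inter> A) + rk (X \<inter> B)))"

definition component :: "'a set \<Rightarrow> ('a set \<Rightarrow> nat) \<Rightarrow> 'a set \<Rightarrow> bool" where
  "component E rk C \<longleftrightarrow> (\<exists>P. direct_sum_decomp E rk P
       \<and> (\<forall>B\<in>P. connected_matroid B rk) \<and> C \<in> P)"

function a_coef :: "'a set set \<Rightarrow> ('a set \<Rightarrow> nat) \<Rightarrow> 'a set \<Rightarrow> int" where
  "a_coef SS rk S =
     (if S = {} \<or> infinite S then 0
      else (int (card S) - int (rk S)) - (\<Sum>T\<in>{T\<in>SS. T \<subset> S}. a_coef SS rk T))"
  by auto
termination
  by (relation "measure (\<lambda>(SS, rk, S). card S)") (auto intro: psubset_card_mono)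

definition ec_on :: "'a set \<Rightarrow> ('a set \<Rightarrow> nat) \<Rightarrow> 'a set set \<Rightarrow> int" where
  "ec_on E rk SS = (\<Sum>S\<in>SS. (int (rk E) - int (rk S)) * a_coef SS rk S)"

definition ec :: "'a set \<Rightarrow> ('a set \<Rightarrow> nat) \<Rightarrow> int" where
  "ec E rk = ec_on E rk (Pow E)"

end

theory Submission
  imports Defs
begin

text \<open>
  Inverting the weights k - rk S from above inside the family gives dual coefficients
  b = dual_coef with ec_SS(M) = \<Sum>_T b(T) c(T), and adding a set X to the family changes ec
  by a(X) b(X).
  If the family is closed under taking components, a vanishes on every disconnected member: the
  nullity of a set is the sum of the nullities of its components, and every connected subset lies
  in exactly one component. Dually, within the connected sets containing a fixed set, b vanishes
  on every S with M/S disconnected: E minus a summand of M/S is again connected, and every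
  S' \<noteq> E above S with M/S' connected contains exactly one such complement. So both SS and P(E)
  may be shrunk to their connected members, and the connected sets missing from SS (all of which
  have a disconnected contraction) can then be added one at a time, largest first, without
  changing ec.
\<close>

lemma matroid_finite: "matroid E rk \<Longrightarrow> finite E"
  unfolding matroid_def by blast

lemma matroid_rank_empty: "matroid E rk \<Longrightarrow> rk {} = 0"
  unfolding matroid_def by (metis card.empty empty_subsetI le_zero_eq)

lemma matroid_rank_mono: "matroid E rk \<Longrightarrow> A \<subseteq> B \<Longrightarrow> B \<subseteq> E \<Longrightarrow> rk A \<le> rk B"
  unfolding matroid_def by blast

lemma matroid_rank_submod:
  "matroid E rk \<Longrightarrow> A \<subseteq> E \<Longrightarrow> B \<subseteq> E \<Longrightarrow> rk (A \<union> B) + rk (A \<inter> B) \<le> rk A + rk B"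
  unfolding matroid_def by blast

section \<open>Separators and direct sums\<close>

definition separator :: "'a set \<Rightarrow> ('a set \<Rightarrow> nat) \<Rightarrow> 'a set \<Rightarrow> bool" where
  "separator E r B \<longleftrightarrow> (\<forall>X. X \<subseteq> E \<longrightarrow> r X = r (X \<inter> B) + r (X - B))"

lemma separatorD: "separator E r B \<Longrightarrow> X \<subseteq> E \<Longrightarrow> r X = r (X \<inter> B) + r (X - B)"
  unfolding separator_def by blast

lemma separator_subset: "separator E r B \<Longrightarrow> U \<subseteq> E \<Longrightarrow> separator U r B"
  unfolding separator_def by blast

lemma not_connected_matroidI:
  assumes sep: "separator E r B" and "E \<inter> B \<noteq> {}" "E - B \<noteq> {}"
  shows "\<not> connected_matroid E r"
proof -
  have "r X = r (X \<inter> (E \<inter> B)) + r (X \<inter> (E - B))" if "X \<subseteq> E" for X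
  proof -
    have "X \<inter> (E \<inter> B) = X \<inter> B" "X \<inter> (E - B) = X - B" using that by auto
    then show ?thesis using separatorD[OF sep that] by simp
  qed
  moreover have "(E \<inter> B) \<inter> (E - B) = {}" "(E \<inter> B) \<union> (E - B) = E" by auto
  ultimately show ?thesis
    unfolding connected_matroid_def not_not using assms(2,3) by (intro exI conjI allI impI) auto
qed

lemma not_connected_matroidE:
  assumes "\<not> connected_matroid E r"
  obtains B where "B \<subseteq> E" "B \<noteq> {}" "E - B \<noteq> {}" "separator E r B"
proof -
  obtain A B where AB: "A \<noteq> {}" "B \<noteq> {}" "A \<inter> B = {}" "A \<union> B = E"
    and split: "\<And>X. X \<subseteq> E \<Longrightarrow> r X = r (X \<inter> A) + r (X \<inter> B)"
    using assms unfolding connected_matroid_def not_not by auto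
  have "separator E r B"
    unfolding separator_def
  proof (intro allI impI)
    fix X assume "X \<subseteq> E"
    moreover have "X \<inter> A = X - B" if "X \<subseteq> E" for X using that AB by blast
    ultimately show "r X = r (X \<inter> B) + r (X - B)" using split by (simp add: add.commute)
  qed
  moreover have "B \<subseteq> E" "E - B \<noteq> {}" using AB by auto
  ultimately show thesis using that AB(2) by simp
qed

lemma connected_matroid_empty: "connected_matroid {} r"
  unfolding connected_matroid_def by auto

lemma separator_of_rank_le:
  assumes m: "matroid E rk" and "B \<subseteq> E" and le: "rk B + rk (E - B) \<le> rk E"
  shows "separator E rk B"
  unfolding separator_def
proof (intro allI impI)
  fix Y assume Y: "Y \<subseteq> E"
  have "rk Y \<le> rk (Y \<inter> B) + rk (Y - B)"
  proof -
    have "(Y \<inter> B) \<union> (Y - B) = Y" "(Y \<inter> B) \<inter> (Y - B) = {}" by auto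
    then show ?thesis
      using matroid_rank_submod[OF m, of "Y \<inter> B" "Y - B"] Y matroid_rank_empty[OF m] by auto
  qed
  moreover have "rk (Y \<union> (E - B)) + rk (Y - B) \<le> rk Y + rk (E - B)"
  proof -
    have "Y \<inter> (E - B) = Y - B" using Y by auto
    then show ?thesis using matroid_rank_submod[OF m, of Y "E - B"] Y by simp
  qed
  moreover have "rk E + rk (Y \<inter> B) \<le> rk (Y \<union> (E - B)) + rk B"
  proof -
    have "(Y \<union> (E - B)) \<union> B = E" "(Y \<union> (E - B)) \<inter> B = Y \<inter> B" using Y \<open>B \<subseteq> E\<close> by auto
    then show ?thesis using matroid_rank_submod[OF m, of "Y \<union> (E - B)" B] Y \<open>B \<subseteq> E\<close> by simp
  qed
  ultimately show "rk Y = rk (Y \<inter> B) + rk (Y - B)" using le by linarith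
qed

lemma decomp_Union: "direct_sum_decomp T r P \<Longrightarrow> \<Union>P = T"
  unfolding direct_sum_decomp_def by blast

lemma decomp_part: "direct_sum_decomp T r P \<Longrightarrow> C \<in> P \<Longrightarrow> C \<subseteq> T \<and> C \<noteq> {}"
  unfolding direct_sum_decomp_def by blast

lemma decomp_disjoint:
  "direct_sum_decomp T r P \<Longrightarrow> C \<in> P \<Longrightarrow> C' \<in> P \<Longrightarrow> C \<noteq> C' \<Longrightarrow> C \<inter> C' = {}"
  unfolding direct_sum_decomp_def by blast

lemma decomp_rank: "direct_sum_decomp T r P \<Longrightarrow> X \<subseteq> T \<Longrightarrow> r X = (\<Sum>C\<in>P. r (X \<inter> C))"
  unfolding direct_sum_decomp_def by blast

lemma finite_decomp: "direct_sum_decomp T r P \<Longrightarrow> finite T \<Longrightarrow> finite P"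
  by (metis decomp_Union finite_UnionD)

lemma decomp_separator:
  assumes P: "direct_sum_decomp T r P" and "finite T" "r {} = 0" and D: "D \<in> P"
  shows "separator T r D"
  unfolding separator_def
proof (intro allI impI)
  fix X assume X: "X \<subseteq> T"
  have fP: "finite P" using finite_decomp[OF P \<open>finite T\<close>] .
  have disj: "C \<inter> D = {}" if "C \<in> P - {D}" for C using decomp_disjoint[OF P _ D] that by blast
  have "r (X - D) = (\<Sum>C\<in>P. r ((X - D) \<inter> C))"
    using decomp_rank[OF P] X by blast
  also have "\<dots> = r ((X - D) \<inter> D) + (\<Sum>C\<in>P - {D}. r ((X - D) \<inter> C))"
    by (rule sum.remove[OF fP D])
  also have "\<dots> = (\<Sum>C\<in>P - {D}. r (X \<inter> C))"
  proof -
    have "(X - D) \<inter> D = {}" "\<And>C. C \<in> P - {D} \<Longrightarrow> (X - D) \<inter> C = X \<inter> C" using disj by auto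
    then show ?thesis using \<open>r {} = 0\<close> by simp
  qed
  finally show "r X = r (X \<inter> D) + r (X - D)"
    using decomp_rank[OF P X] by (simp add: sum.remove[OF fP D])
qed

lemma decomp_Un:
  assumes PA: "direct_sum_decomp A r PA" and PB: "direct_sum_decomp B r PB"
    and "A \<inter> B = {}" "finite A" "finite B"
    and split: "\<And>X. X \<subseteq> A \<union> B \<Longrightarrow> r X = r (X \<inter> A) + r (X \<inter> B)"
  shows "direct_sum_decomp (A \<union> B) r (PA \<union> PB)"
proof -
  have partA: "C \<subseteq> A" "C \<noteq> {}" if "C \<in> PA" for C using decomp_part[OF PA that] by auto
  have partB: "C \<subseteq> B" "C \<noteq> {}" if "C \<in> PB" for C using decomp_part[OF PB that] by auto
  have "C \<notin> PB" if "C \<in> PA" for C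
  proof
    assume "C \<in> PB"
    then have "C \<subseteq> A \<inter> B" using partA(1)[OF that] partB(1) by blast
    then show False using partA(2)[OF that] \<open>A \<inter> B = {}\<close> by blast
  qed
  then have "PA \<inter> PB = {}" by blast
  have fin: "finite PA" "finite PB"
    using finite_decomp[OF PA \<open>finite A\<close>] finite_decomp[OF PB \<open>finite B\<close>] .
  have rank: "\<forall>X. X \<subseteq> A \<union> B \<longrightarrow> r X = (\<Sum>C\<in>PA \<union> PB. r (X \<inter> C))"
  proof (intro allI impI)
    fix X assume X: "X \<subseteq> A \<union> B"
    have "X \<inter> A \<inter> C = X \<inter> C" if "C \<in> PA" for C using partA(1)[OF that] by blast
    then have "r (X \<inter> A) = (\<Sum>C\<in>PA. r (X \<inter> C))"
      using decomp_rank[OF PA, of "X \<inter> A"] by simp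
    moreover have "X \<inter> B \<inter> C = X \<inter> C" if "C \<in> PB" for C using partB(1)[OF that] by blast
    then have "r (X \<inter> B) = (\<Sum>C\<in>PB. r (X \<inter> C))"
      using decomp_rank[OF PB, of "X \<inter> B"] by simp
    ultimately show "r X = (\<Sum>C\<in>PA \<union> PB. r (X \<inter> C))"
      using split[OF X] sum.union_disjoint[OF fin \<open>PA \<inter> PB = {}\<close>, of "\<lambda>C. r (X \<inter> C)"] by simp
  qed
  have disj: "\<forall>C\<in>PA \<union> PB. \<forall>C'\<in>PA \<union> PB. C \<noteq> C' \<longrightarrow> C \<inter> C' = {}"
  proof (intro ballI impI)
    fix C C' assume C: "C \<in> PA \<union> PB" and C': "C' \<in> PA \<union> PB" and "C \<noteq> C'"
    have cross: "C \<inter> C' = {}" if "C \<in> PA" "C' \<in> PB" for C C'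
      using partA(1)[OF that(1)] partB(1)[OF that(2)] \<open>A \<inter> B = {}\<close> by blast
    from C C' show "C \<inter> C' = {}"
    proof (elim UnE)
      assume "C \<in> PA" "C' \<in> PA"
      then show ?thesis using decomp_disjoint[OF PA] \<open>C \<noteq> C'\<close> by blast
    next
      assume "C \<in> PB" "C' \<in> PB"
      then show ?thesis using decomp_disjoint[OF PB] \<open>C \<noteq> C'\<close> by blast
    next
      assume "C \<in> PA" "C' \<in> PB"
      then show ?thesis by (rule cross)
    next
      assume "C \<in> PB" "C' \<in> PA"
      then show ?thesis using cross[of C' C] by blast
    qed
  qed
  have "\<Union>(PA \<union> PB) = A \<union> B" using decomp_Union[OF PA] decomp_Union[OF PB] by auto
  moreover have "\<forall>C\<in>PA \<union> PB. C \<noteq> {}" using partA(2) partB(2) by blast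
  ultimately show ?thesis
    unfolding direct_sum_decomp_def using disj rank by (intro conjI)
qed

lemma connected_decomp_exists:
  assumes "finite T" "T \<noteq> {}"
  shows "\<exists>P. direct_sum_decomp T r P \<and> (\<forall>C\<in>P. connected_matroid C r)"
  using assms
proof (induction T rule: finite_psubset_induct)
  case (psubset T)
  show ?case
  proof (cases "connected_matroid T r")
    case True
    have "direct_sum_decomp T r {T}"
      unfolding direct_sum_decomp_def using psubset.prems by (auto simp: Int_absorb2)
    with True show ?thesis by blast
  next
    case False
    then obtain B where B: "B \<subseteq> T" "B \<noteq> {}" "T - B \<noteq> {}" and sep: "separator T r B"
      by (rule not_connected_matroidE)
    obtain PA PB where PA: "direct_sum_decomp (T - B) r PA" "\<forall>C\<in>PA. connected_matroid C r"
      and PB: "direct_sum_decomp B r PB" "\<forall>C\<in>PB. connected_matroid C r"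
      using psubset.IH[of B] psubset.IH[of "T - B"] B by blast
    have "direct_sum_decomp ((T - B) \<union> B) r (PA \<union> PB)"
    proof (rule decomp_Un[OF PA(1) PB(1)])
      fix X assume "X \<subseteq> (T - B) \<union> B"
      then have "X \<subseteq> T" "X \<inter> (T - B) = X - B" using B(1) by auto
      then show "r X = r (X \<inter> (T - B)) + r (X \<inter> B)"
        using separatorD[OF sep, of X] by simp
    qed (use psubset.hyps B in \<open>auto intro: finite_subset\<close>)
    moreover have "(T - B) \<union> B = T" using B by auto
    ultimately show ?thesis using PA PB by auto
  qed
qed

lemma decomp_connected_subset_unique:
  assumes P: "direct_sum_decomp T r P" and "finite T" "r {} = 0"
    and U: "U \<subseteq> T" "U \<noteq> {}" "connected_matroid U r"
  shows "card {C\<in>P. U \<subseteq> C} = 1"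
proof -
  obtain x where "x \<in> U" using U by blast
  then obtain C0 where C0: "C0 \<in> P" "x \<in> C0" using decomp_Union[OF P] U by blast
  have "U \<subseteq> C0"
  proof (rule ccontr)
    assume "\<not> U \<subseteq> C0"
    moreover have "separator U r C0"
      using separator_subset[OF decomp_separator[OF P assms(2,3) C0(1)] U(1)] .
    ultimately have "\<not> connected_matroid U r"
      using \<open>x \<in> U\<close> C0 by (intro not_connected_matroidI) auto
    then show False using U by blast
  qed
  have "{C\<in>P. U \<subseteq> C} = {C0}"
    using \<open>U \<subseteq> C0\<close> C0 \<open>x \<in> U\<close> decomp_disjoint[OF P _ C0(1)] by blast
  then show ?thesis by simp
qed

lemma decomp_nullity_sum:
  assumes P: "direct_sum_decomp T r P" and "finite T"
  shows "int (card T) - int (r T) = (\<Sum>C\<in>P. int (card C) - int (r C))"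
proof -
  have part: "C \<subseteq> T" if "C \<in> P" for C using decomp_part[OF P that] by blast
  have "card T = (\<Sum>C\<in>P. card C)"
  proof -
    have "pairwise disjnt P" using decomp_disjoint[OF P] unfolding pairwise_def disjnt_def by blast
    with part have "card (\<Union>P) = (\<Sum>C\<in>P. card C)"
      using \<open>finite T\<close> by (intro card_Union_disjoint) (auto intro: finite_subset)
    then show ?thesis using decomp_Union[OF P] by simp
  qed
  moreover have "r T = (\<Sum>C\<in>P. r C)"
    using decomp_rank[OF P, of T] part by (simp add: Int_absorb1)
  ultimately show ?thesis by (simp add: sum_subtractf)
qed

lemma component_connected: "component S rk C \<Longrightarrow> connected_matroid C rk"
  unfolding component_def by blast

lemma component_subset: "component S rk C \<Longrightarrow> C \<subseteq> S"
  unfolding component_def using decomp_part by blast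

section \<open>Contraction\<close>

lemma contr_rk_add: "matroid E rk \<Longrightarrow> A \<union> S \<subseteq> E \<Longrightarrow> contr_rk rk S A + rk S = rk (A \<union> S)"
  unfolding contr_rk_def using matroid_rank_mono[of E rk S "A \<union> S"] by auto

lemma contr_rk_empty [simp]: "contr_rk rk S {} = 0"
  unfolding contr_rk_def by simp

lemma contr_rk_mono:
  "matroid E rk \<Longrightarrow> A \<subseteq> B \<Longrightarrow> B \<union> S \<subseteq> E \<Longrightarrow> contr_rk rk S A \<le> contr_rk rk S B"
  unfolding contr_rk_def by (intro diff_le_mono matroid_rank_mono) auto

lemma contr_rk_contr_rk:
  assumes m: "matroid E rk" and "S \<subseteq> U" "Y \<union> U \<subseteq> E"
  shows "contr_rk (contr_rk rk S) (U - S) Y = contr_rk rk U Y"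
proof -
  have "rk S \<le> rk U" "rk U \<le> rk (Y \<union> U)"
    using assms by (auto intro: matroid_rank_mono[OF m])
  moreover have "Y \<union> (U - S) \<union> S = Y \<union> U" "U - S \<union> S = U" using \<open>S \<subseteq> U\<close> by auto
  ultimately show ?thesis unfolding contr_rk_def by simp
qed

lemma separator_cong:
  "separator E r B \<Longrightarrow> (\<And>X. X \<subseteq> E \<Longrightarrow> r X = r' X) \<Longrightarrow> separator E r' B"
  unfolding separator_def by (metis Diff_subset Int_lower1 subset_trans)

lemma separator_complement: "separator E r B \<Longrightarrow> separator E r (E - B)"
  unfolding separator_def
proof (intro allI impI)
  fix X assume "\<forall>X. X \<subseteq> E \<longrightarrow> r X = r (X \<inter> B) + r (X - B)" "X \<subseteq> E"
  moreover have "X \<inter> (E - B) = X - B" "X - (E - B) = X \<inter> B" using \<open>X \<subseteq> E\<close> by auto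
  ultimately show "r X = r (X \<inter> (E - B)) + r (X - (E - B))" by simp
qed

lemma separator_contr:
  assumes sep: "separator X r D" and "V \<subseteq> X"
    \<comment> \<open>needed because contr_rk uses truncated subtraction\<close>
    and mono: "\<And>A B. A \<subseteq> B \<Longrightarrow> B \<subseteq> X \<Longrightarrow> r A \<le> r B"
  shows "separator (X - V) (contr_rk r V) D"
  unfolding separator_def
proof (intro allI impI)
  fix Y assume Y: "Y \<subseteq> X - V"
  have subs: "Y \<union> V \<subseteq> X" "(Y \<inter> D) \<union> V \<subseteq> X" "(Y - D) \<union> V \<subseteq> X" using Y \<open>V \<subseteq> X\<close> by auto
  have parts: "((Y \<inter> D) \<union> V) \<inter> D = (Y \<union> V) \<inter> D" "((Y \<inter> D) \<union> V) - D = V - D"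
    "((Y - D) \<union> V) \<inter> D = V \<inter> D" "((Y - D) \<union> V) - D = (Y \<union> V) - D" by auto
  note separatorD[OF sep subs(1)] separatorD[OF sep \<open>V \<subseteq> X\<close>]
    separatorD[OF sep subs(2), unfolded parts(1,2)] separatorD[OF sep subs(3), unfolded parts(3,4)]
  moreover have "r (V \<inter> D) \<le> r ((Y \<union> V) \<inter> D)" "r (V - D) \<le> r ((Y \<union> V) - D)"
    using Y \<open>V \<subseteq> X\<close> by (auto intro!: mono)
  ultimately show "contr_rk r V Y = contr_rk r V (Y \<inter> D) + contr_rk r V (Y - D)"
    unfolding contr_rk_def by simp
qed

lemma separator_contr_superset:
  assumes m: "matroid E rk" and "S \<subseteq> U" "U \<subseteq> E"
    and sep: "separator (E - S) (contr_rk rk S) D"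
  shows "separator (E - U) (contr_rk rk U) D"
proof -
  have "separator ((E - S) - (U - S)) (contr_rk (contr_rk rk S) (U - S)) D"
  proof (rule separator_contr[OF sep])
    show "U - S \<subseteq> E - S" using \<open>U \<subseteq> E\<close> by blast
    show "contr_rk rk S A \<le> contr_rk rk S B" if "A \<subseteq> B" "B \<subseteq> E - S" for A B
      using that \<open>S \<subseteq> U\<close> \<open>U \<subseteq> E\<close> by (intro contr_rk_mono[OF m]) auto
  qed
  moreover have "(E - S) - (U - S) = E - U" using assms by auto
  ultimately have "separator (E - U) (contr_rk (contr_rk rk S) (U - S)) D" by simp
  then show ?thesis
    by (rule separator_cong) (use contr_rk_contr_rk[OF m \<open>S \<subseteq> U\<close>] \<open>U \<subseteq> E\<close> in auto)
qed

lemma contr_separator_rank: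
  assumes m: "matroid E rk" and "S \<subseteq> E" "D \<subseteq> E - S"
    and sep: "separator (E - S) (contr_rk rk S) D"
  shows "contr_rk rk S D + rk (E - D) = rk E"
proof -
  have "(E - S) \<inter> D = D" using \<open>D \<subseteq> E - S\<close> by blast
  then have "contr_rk rk S (E - S) = contr_rk rk S D + contr_rk rk S (E - S - D)"
    using separatorD[OF sep, of "E - S"] by simp
  moreover have "(E - S) \<union> S = E" "(E - S - D) \<union> S = E - D" using assms by auto
  then have "contr_rk rk S (E - S) + rk S = rk E" "contr_rk rk S (E - S - D) + rk S = rk (E - D)"
    using contr_rk_add[OF m, of "E - S" S] contr_rk_add[OF m, of "E - S - D" S] assms by auto
  ultimately show ?thesis by linarith
qed

lemma contr_decomp_rank_sum:
  assumes m: "matroid E rk" and "S \<subseteq> E"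
    and P: "direct_sum_decomp (E - S) (contr_rk rk S) P"
  shows "int (rk E) - int (rk S) = (\<Sum>D\<in>P. int (rk E) - int (rk (E - D)))"
proof -
  have part: "D \<subseteq> E - S" "separator (E - S) (contr_rk rk S) D" if "D \<in> P" for D
    using decomp_part[OF P that] decomp_separator[OF P _ _ that] matroid_finite[OF m] by auto
  have "contr_rk rk S (E - S) = (\<Sum>D\<in>P. contr_rk rk S D)"
    using decomp_rank[OF P, of "E - S"] part by (simp add: Int_absorb1)
  moreover have "contr_rk rk S (E - S) + rk S = rk E"
    using contr_rk_add[OF m, of "E - S" S] \<open>S \<subseteq> E\<close> by (simp add: Un_absorb2)
  ultimately have "rk E = (\<Sum>D\<in>P. contr_rk rk S D) + rk S" by simp
  then have "int (rk E) - int (rk S) = (\<Sum>D\<in>P. int (contr_rk rk S D))"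
    by (simp add: of_nat_sum)
  also have "\<dots> = (\<Sum>D\<in>P. int (rk E) - int (rk (E - D)))"
  proof (rule sum.cong[OF refl])
    fix D assume "D \<in> P"
    then have "contr_rk rk S D + rk (E - D) = rk E"
      using contr_separator_rank[OF m \<open>S \<subseteq> E\<close>] part by blast
    then show "int (contr_rk rk S D) = int (rk E) - int (rk (E - D))" by simp
  qed
  finally show ?thesis .
qed

lemma separator_of_contr_separator:
  assumes m: "matroid E rk" and "S \<subseteq> E" "D \<subseteq> E - S"
    and sepD: "separator (E - S) (contr_rk rk S) D"
    and sepB: "separator (E - D) rk B" and "B \<subseteq> E - D" "B \<inter> S = {}"
  shows "separator E rk B"
proof (rule separator_of_rank_le[OF m])
  show "B \<subseteq> E" using \<open>B \<subseteq> E - D\<close> by blast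
  define A where "A = (E - D) - B"
  have "(E - D) \<inter> B = B" "(E - D) - B = A" using \<open>B \<subseteq> E - D\<close> by (auto simp: A_def)
  then have "rk (E - D) = rk B + rk A" using separatorD[OF sepB, of "E - D"] by simp
  moreover have "A \<union> (D \<union> S) = E - B" "A \<inter> (D \<union> S) = S"
    using assms by (auto simp: A_def)
  then have "rk (E - B) + rk S \<le> rk A + rk (D \<union> S)"
    using matroid_rank_submod[OF m, of A "D \<union> S"] assms by (auto simp: A_def)
  moreover have "contr_rk rk S D + rk (E - D) = rk E"
    using contr_separator_rank[OF m \<open>S \<subseteq> E\<close> \<open>D \<subseteq> E - S\<close> sepD] .
  moreover have "contr_rk rk S D + rk S = rk (D \<union> S)"
    using contr_rk_add[OF m, of D S] assms by auto
  ultimately show "rk B + rk (E - B) \<le> rk E" by linarith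
qed

lemma connected_complement_of_contr_separator:
  assumes m: "matroid E rk" and cE: "connected_matroid E rk"
    and "S \<subseteq> E" and cS: "connected_matroid S rk" and "D \<subseteq> E - S"
    and sepD: "separator (E - S) (contr_rk rk S) D"
  shows "connected_matroid (E - D) rk"
proof (rule ccontr)
  assume "\<not> connected_matroid (E - D) rk"
  then obtain B where B: "B \<subseteq> E - D" "B \<noteq> {}" "(E - D) - B \<noteq> {}" and sepB: "separator (E - D) rk B"
    by (rule not_connected_matroidE)
  have "S \<subseteq> E - D" using assms by blast
  have "S \<inter> B = {} \<or> S - B = {}"
  proof (rule ccontr)
    assume "\<not> (S \<inter> B = {} \<or> S - B = {})"
    then have "\<not> connected_matroid S rk"
      using separator_subset[OF sepB \<open>S \<subseteq> E - D\<close>] by (intro not_connected_matroidI) auto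
    then show False using cS by blast
  qed
  then obtain B' where B': "B' \<subseteq> E - D" "B' \<noteq> {}" "(E - D) - B' \<noteq> {}" "B' \<inter> S = {}"
    and sepB': "separator (E - D) rk B'"
  proof
    assume "S \<inter> B = {}"
    then show thesis using that[of B] B sepB by blast
  next
    assume "S - B = {}"
    moreover have "(E - D) - ((E - D) - B) = B" using B(1) by blast
    ultimately show thesis
      using that[of "(E - D) - B"] B separator_complement[OF sepB] \<open>S \<subseteq> E - D\<close> by auto
  qed
  have "separator E rk B'"
    using separator_of_contr_separator[OF m \<open>S \<subseteq> E\<close> \<open>D \<subseteq> E - S\<close> sepD sepB' B'(1,4)] .
  moreover have "E \<inter> B' \<noteq> {}" "E - B' \<noteq> {}" using B' by auto
  ultimately show False using cE not_connected_matroidI by blast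
qed

lemma contr_decomp_connected_unique:
  assumes m: "matroid E rk" and "S \<subseteq> U" "U \<subseteq> E" "U \<noteq> E"
    and P: "direct_sum_decomp (E - S) (contr_rk rk S) P"
    and conn: "connected_matroid (E - U) (contr_rk rk U)"
  shows "card {D\<in>P. E - D \<subseteq> U} = 1"
proof -
  obtain x where x: "x \<in> E" "x \<notin> U" using assms by blast
  then obtain D0 where D0: "D0 \<in> P" "x \<in> D0"
    using decomp_Union[OF P] \<open>S \<subseteq> U\<close> by blast
  have "E - U \<subseteq> D0"
  proof (rule ccontr)
    assume "\<not> E - U \<subseteq> D0"
    moreover have "separator (E - S) (contr_rk rk S) D0"
      using decomp_separator[OF P _ _ D0(1)] matroid_finite[OF m] by simp
    then have "separator (E - U) (contr_rk rk U) D0"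
      using separator_contr_superset[OF m \<open>S \<subseteq> U\<close> \<open>U \<subseteq> E\<close>] by blast
    ultimately have "\<not> connected_matroid (E - U) (contr_rk rk U)"
      using x D0 by (intro not_connected_matroidI) auto
    then show False using conn by blast
  qed
  have "D = D0" if "D \<in> P" "E - D \<subseteq> U" for D
  proof (rule ccontr)
    assume "D \<noteq> D0"
    then have "D \<inter> D0 = {}" using decomp_disjoint[OF P that(1) D0(1)] by blast
    then show False using that(2) x D0(2) by blast
  qed
  then have "{D\<in>P. E - D \<subseteq> U} = {D0}" using \<open>E - U \<subseteq> D0\<close> D0(1) by blast
  then show ?thesis by simp
qed

section \<open>The coefficients and their duals\<close>

declare a_coef.simps [simp del]

lemma a_coef_empty [simp]: "a_coef F rk {} = 0"
  by (simp add: a_coef.simps)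

lemma a_coef_eq:
  "finite S \<Longrightarrow> rk {} = 0 \<Longrightarrow>
    a_coef F rk S = (int (card S) - int (rk S)) - (\<Sum>T\<in>{T\<in>F. T \<subset> S}. a_coef F rk T)"
  by (cases "S = {}") (subst a_coef.simps, simp)+

lemma sum_a_coef_below:
  assumes "finite S" "rk {} = 0" "S \<in> F"
  shows "(\<Sum>T\<in>{T\<in>F. T \<subseteq> S}. a_coef F rk T) = int (card S) - int (rk S)"
proof -
  have "finite {T\<in>F. T \<subset> S}" using \<open>finite S\<close> by (auto intro: finite_subset[of _ "Pow S"])
  moreover have "{T\<in>F. T \<subseteq> S} = insert S {T\<in>F. T \<subset> S}" using \<open>S \<in> F\<close> by auto
  ultimately show ?thesis using a_coef_eq[of S rk F] assms by simp
qed

lemma a_coef_cong: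
  assumes "\<And>T. T \<subset> S \<Longrightarrow> T \<in> F \<longleftrightarrow> T \<in> G"
  shows "a_coef F rk S = a_coef G rk S"
proof (cases "finite S")
  case False
  then show ?thesis by (simp add: a_coef.simps)
next
  case True
  then show ?thesis using assms
  proof (induction S rule: finite_psubset_induct)
    case (psubset S)
    have "{T\<in>F. T \<subset> S} = {T\<in>G. T \<subset> S}" using psubset.prems by auto
    moreover have "a_coef F rk T = a_coef G rk T" if "T \<subset> S" for T
      using that psubset.IH psubset.prems by (meson psubset_trans)
    ultimately show ?case
      by (subst (1 2) a_coef.simps) (auto intro!: sum.cong)
  qed
qed

text \<open>Moebius inversion of S \<mapsto> rk E - rk S from above within F, the counterpart of a_coef,
  which inverts the nullity from below.\<close>

function dual_coef :: "'a set \<Rightarrow> ('a set \<Rightarrow> nat) \<Rightarrow> 'a set set \<Rightarrow> 'a set \<Rightarrow> int" where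
  "dual_coef E rk F S =
     (if infinite E \<or> \<not> S \<subseteq> E then 0
      else (int (rk E) - int (rk S)) - (\<Sum>T\<in>{T\<in>F. S \<subset> T \<and> T \<subseteq> E}. dual_coef E rk F T))"
  by auto
termination
proof (relation "measure (\<lambda>(E, rk, F, S). card (E - S))")
  fix E S T :: "'a set" and rk :: "'a set \<Rightarrow> nat" and F
  assume "\<not> (infinite E \<or> \<not> S \<subseteq> E)" "T \<in> {T\<in>F. S \<subset> T \<and> T \<subseteq> E}"
  then have "finite E" "E - T \<subset> E - S" by auto
  then show "((E, rk, F, T), (E, rk, F, S)) \<in> measure (\<lambda>(E, rk, F, S). card (E - S))"
    by (simp add: psubset_card_mono)
qed simp

declare dual_coef.simps [simp del]

lemma dual_coef_eq:
  "finite E \<Longrightarrow> S \<subseteq> E \<Longrightarrow>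
    dual_coef E rk F S = (int (rk E) - int (rk S)) - (\<Sum>T\<in>{T\<in>F. S \<subset> T \<and> T \<subseteq> E}. dual_coef E rk F T)"
  by (subst dual_coef.simps) simp

lemma dual_coef_top:
  assumes "finite E"
  shows "dual_coef E rk F E = 0"
proof -
  have none_above: "{T\<in>F. E \<subset> T \<and> T \<subseteq> E} = {}" by auto
  show ?thesis using dual_coef_eq[OF assms subset_refl, of rk F] unfolding none_above by simp
qed

lemma sum_dual_coef_above:
  assumes "finite E" "F \<subseteq> Pow E" "S \<in> F"
  shows "(\<Sum>T\<in>{T\<in>F. S \<subseteq> T}. dual_coef E rk F T) = int (rk E) - int (rk S)"
proof -
  have "S \<subseteq> E" using assms by blast
  have "finite {T\<in>F. S \<subset> T \<and> T \<subseteq> E}" using \<open>finite E\<close> by (auto intro: finite_subset[of _ "Pow E"])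
  moreover have "{T\<in>F. S \<subseteq> T} = insert S {T\<in>F. S \<subset> T \<and> T \<subseteq> E}" using assms by auto
  ultimately show ?thesis using dual_coef_eq[OF \<open>finite E\<close> \<open>S \<subseteq> E\<close>, of rk F] by simp
qed

lemma dual_coef_cong:
  assumes "finite E" and "\<And>T. S \<subset> T \<Longrightarrow> T \<subseteq> E \<Longrightarrow> T \<in> F \<longleftrightarrow> T \<in> G"
  shows "dual_coef E rk F S = dual_coef E rk G S"
  using assms(2)
proof (induction "card (E - S)" arbitrary: S rule: less_induct)
  case less
  show ?case
  proof (cases "S \<subseteq> E")
    case False
    then show ?thesis by (subst (1 2) dual_coef.simps) simp
  next
    case True
    have "{T\<in>F. S \<subset> T \<and> T \<subseteq> E} = {T\<in>G. S \<subset> T \<and> T \<subseteq> E}" using less.prems by auto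
    moreover have "dual_coef E rk F T = dual_coef E rk G T" if "S \<subset> T" "T \<subseteq> E" for T
    proof (rule less.hyps)
      show "card (E - T) < card (E - S)"
        using that \<open>finite E\<close> by (intro psubset_card_mono) auto
    qed (use that less.prems in auto)
    ultimately show ?thesis
      using dual_coef_eq[OF \<open>finite E\<close> True] by (auto intro!: sum.cong)
  qed
qed

lemma sum_weighted_a_coef:
  fixes w :: "'a set \<Rightarrow> int"
  assumes "finite E" "rk {} = 0" "F \<subseteq> G" "G \<subseteq> Pow E"
  shows "(\<Sum>S\<in>G. (\<Sum>T\<in>{T\<in>F. S \<subseteq> T}. w T) * a_coef G rk S)
       = (\<Sum>T\<in>F. w T * (int (card T) - int (rk T)))"
proof -
  have "finite G" using assms by (meson finite_Pow_iff finite_subset)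
  moreover have "finite F" using \<open>F \<subseteq> G\<close> calculation by (rule finite_subset)
  ultimately have "(\<Sum>S\<in>G. (\<Sum>T\<in>{T\<in>F. S \<subseteq> T}. w T) * a_coef G rk S)
      = (\<Sum>T\<in>F. w T * (\<Sum>S\<in>{S\<in>G. S \<subseteq> T}. a_coef G rk S))"
    by (simp add: sum_distrib_left sum_distrib_right sum.swap_restrict[of G F] mult.commute)
  also have "\<dots> = (\<Sum>T\<in>F. w T * (int (card T) - int (rk T)))"
  proof (rule sum.cong[OF refl])
    fix T assume "T \<in> F"
    then have "finite T" "T \<in> G" using assms by (auto intro: finite_subset)
    then show "w T * (\<Sum>S\<in>{S\<in>G. S \<subseteq> T}. a_coef G rk S) = w T * (int (card T) - int (rk T))"
      using sum_a_coef_below[of T rk G] \<open>rk {} = 0\<close> by simp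
  qed
  finally show ?thesis .
qed

lemma ec_on_eq_sum_dual_coef:
  assumes "finite E" "rk {} = 0" "F \<subseteq> Pow E"
  shows "ec_on E rk F = (\<Sum>T\<in>F. dual_coef E rk F T * (int (card T) - int (rk T)))"
proof -
  have "ec_on E rk F = (\<Sum>S\<in>F. (\<Sum>T\<in>{T\<in>F. S \<subseteq> T}. dual_coef E rk F T) * a_coef F rk S)"
    unfolding ec_on_def using sum_dual_coef_above[OF assms(1,3)] by simp
  then show ?thesis using sum_weighted_a_coef[of E rk F F] assms by simp
qed

lemma ec_on_insert:
  assumes "finite E" "rk {} = 0" "F \<subseteq> Pow E" "X \<subseteq> E" "X \<notin> F"
  shows "ec_on E rk (insert X F) = ec_on E rk F + a_coef F rk X * dual_coef E rk F X"
proof -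
  let ?G = "insert X F" and ?u = "dual_coef E rk F"
  have G: "?G \<subseteq> Pow E" using assms by auto
  have weight: "int (rk E) - int (rk S) = (\<Sum>T\<in>{T\<in>F. S \<subseteq> T}. ?u T) + (if S = X then ?u X else 0)"
    if "S \<in> ?G" for S
  proof (cases "S = X")
    case True
    have "{T\<in>F. X \<subseteq> T} = {T\<in>F. X \<subset> T \<and> T \<subseteq> E}" using assms by auto
    then show ?thesis using True dual_coef_eq[OF assms(1,4), of rk F] by simp
  next
    case False
    then show ?thesis using that sum_dual_coef_above[OF assms(1,3)] by simp
  qed
  have "finite ?G" using G \<open>finite E\<close> by (meson finite_Pow_iff finite_subset)
  have "ec_on E rk ?G = (\<Sum>S\<in>?G. ((\<Sum>T\<in>{T\<in>F. S \<subseteq> T}. ?u T) + (if S = X then ?u X else 0))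
                                     * a_coef ?G rk S)"
    unfolding ec_on_def using weight by (intro sum.cong) auto
  also have "\<dots> = (\<Sum>S\<in>?G. (\<Sum>T\<in>{T\<in>F. S \<subseteq> T}. ?u T) * a_coef ?G rk S)
                  + (\<Sum>S\<in>?G. if S = X then ?u X * a_coef ?G rk S else 0)"
    by (subst sum.distrib[symmetric]) (rule sum.cong, auto simp: distrib_right)
  also have "(\<Sum>S\<in>?G. if S = X then ?u X * a_coef ?G rk S else 0) = ?u X * a_coef ?G rk X"
    using \<open>finite ?G\<close> by (simp add: sum.delta)
  also have "a_coef ?G rk X = a_coef F rk X"
    by (rule a_coef_cong) auto
  also have "(\<Sum>S\<in>?G. (\<Sum>T\<in>{T\<in>F. S \<subseteq> T}. ?u T) * a_coef ?G rk S) = ec_on E rk F"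
    using sum_weighted_a_coef[of E rk F ?G] ec_on_eq_sum_dual_coef[of E rk F] assms G by auto
  finally show ?thesis by simp
qed

lemma ec_on_Un_eq:
  assumes "finite E" "rk {} = 0" "F \<subseteq> Pow E" "D \<subseteq> Pow E" "F \<inter> D = {}"
    and vanish: "\<And>D' X. D' \<subseteq> D \<Longrightarrow> X \<in> D - D' \<Longrightarrow>
                   a_coef (F \<union> D') rk X * dual_coef E rk (F \<union> D') X = 0"
  shows "ec_on E rk (F \<union> D) = ec_on E rk F"
proof -
  have "finite D" using assms by (meson finite_Pow_iff finite_subset)
  have "ec_on E rk (F \<union> D') = ec_on E rk F" if "D' \<subseteq> D" for D'
    using finite_subset[OF that \<open>finite D\<close>] that
  proof (induction D' rule: finite_subset_induct')
    case (insert X D')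
    have "F \<union> insert X D' = insert X (F \<union> D')" by simp
    moreover have "X \<subseteq> E" "X \<notin> F \<union> D'" "F \<union> D' \<subseteq> Pow E"
      using insert.hyps assms by auto
    ultimately show ?case
      using ec_on_insert[of E rk "F \<union> D'" X] assms(1,2) vanish[of D' X] insert by simp
  qed simp
  then show ?thesis by blast
qed

lemma sum_a_coef_below_decomp:
  assumes "finite T" "rk {} = 0" "T \<in> F"
    and P: "direct_sum_decomp T rk P" and "P \<subseteq> F"
  shows "(\<Sum>U\<in>{U\<in>F. U \<subseteq> T}. a_coef F rk U)
       = (\<Sum>C\<in>P. \<Sum>U\<in>{U\<in>{U\<in>F. U \<subseteq> T}. U \<subseteq> C}. a_coef F rk U)"
proof -
  have "(\<Sum>U\<in>{U\<in>F. U \<subseteq> T}. a_coef F rk U) = (\<Sum>C\<in>P. int (card C) - int (rk C))"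
    using sum_a_coef_below[of T rk F] decomp_nullity_sum[OF P] assms by simp
  also have "\<dots> = (\<Sum>C\<in>P. \<Sum>U\<in>{U\<in>{U\<in>F. U \<subseteq> T}. U \<subseteq> C}. a_coef F rk U)"
  proof (rule sum.cong[OF refl])
    fix C assume "C \<in> P"
    then have "C \<subseteq> T" "C \<in> F" using decomp_part[OF P] \<open>P \<subseteq> F\<close> by auto
    then have "finite C" "{U\<in>{U\<in>F. U \<subseteq> T}. U \<subseteq> C} = {U\<in>F. U \<subseteq> C}"
      using \<open>finite T\<close> by (auto intro: finite_subset)
    then show "int (card C) - int (rk C) = (\<Sum>U\<in>{U\<in>{U\<in>F. U \<subseteq> T}. U \<subseteq> C}. a_coef F rk U)"
      using sum_a_coef_below[of C rk F] \<open>rk {} = 0\<close> \<open>C \<in> F\<close> by simp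
  qed
  finally show ?thesis .
qed

section \<open>Vanishing of the coefficients\<close>

lemma sum_over_parts_vanishes_at_top:
  fixes g :: "'b \<Rightarrow> int"
  assumes "finite Q" "finite P" "T \<in> Q"
    and parts: "(\<Sum>U\<in>Q. g U) = (\<Sum>C\<in>P. \<Sum>U\<in>{U\<in>Q. R U C}. g U)"
    and top: "\<And>C. C \<in> P \<Longrightarrow> \<not> R T C"
    and unique: "\<And>U. U \<in> Q \<Longrightarrow> U \<noteq> T \<Longrightarrow> g U \<noteq> 0 \<Longrightarrow> card {C\<in>P. R U C} = 1"
  shows "g T = 0"
proof -
  \<comment> \<open>On the right each U is counted card {C\<in>P. R U C} times, so all terms but that of T cancel.\<close>
  have "(\<Sum>C\<in>P. \<Sum>U\<in>{U\<in>Q. R U C}. g U) = (\<Sum>U\<in>Q. of_nat (card {C\<in>P. R U C}) * g U)"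
    using sum.swap_restrict[OF assms(2,1), of "\<lambda>C U. g U" "\<lambda>C U. R U C"] by simp
  with parts have "(\<Sum>U\<in>Q. (1 - of_nat (card {C\<in>P. R U C})) * g U) = 0"
    by (simp add: algebra_simps sum_subtractf)
  moreover have "(\<Sum>U\<in>Q. (1 - of_nat (card {C\<in>P. R U C})) * g U) = g T"
  proof -
    have "(\<Sum>U\<in>Q - {T}. (1 - of_nat (card {C\<in>P. R U C})) * g U) = 0"
      using unique by (intro sum.neutral) fastforce
    then have "(\<Sum>U\<in>Q. (1 - of_nat (card {C\<in>P. R U C})) * g U)
        = (1 - of_nat (card {C\<in>P. R T C})) * g T"
      by (simp add: sum.remove[OF \<open>finite Q\<close> \<open>T \<in> Q\<close>])
    moreover have "{C\<in>P. R T C} = {}" using top by blast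
    ultimately show ?thesis by simp
  qed
  ultimately show ?thesis by simp
qed

lemma a_coef_eq_0_if_not_connected:
  assumes m: "matroid E rk" and F: "F \<subseteq> Pow E"
    and closed: "\<And>S C. S \<in> F \<Longrightarrow> component S rk C \<Longrightarrow> C \<in> F"
    and "T \<in> F" "\<not> connected_matroid T rk"
  shows "a_coef F rk T = 0"
proof -
  have "finite T" using assms matroid_finite[OF m] by (meson PowD finite_subset subsetD)
  then show ?thesis using assms(4,5)
  proof (induction T rule: finite_psubset_induct)
    case (psubset T)
    have "rk {} = 0" using matroid_rank_empty[OF m] .
    have "T \<noteq> {}" using psubset.prems connected_matroid_empty by blast
    then obtain P where P: "direct_sum_decomp T rk P" and Pc: "\<forall>C\<in>P. connected_matroid C rk"
      using connected_decomp_exists[OF psubset.hyps] by blast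
    have part: "C \<subseteq> T" "C \<in> F" if "C \<in> P" for C
      using decomp_part[OF P that] closed[OF psubset.prems(1)] P Pc that
      unfolding component_def by blast+
    let ?Q = "{U\<in>F. U \<subseteq> T}"
    show ?case
    proof (rule sum_over_parts_vanishes_at_top[where Q = ?Q and P = P and R = "\<lambda>U C. U \<subseteq> C"])
      show "finite ?Q" using psubset.hyps by (auto intro: finite_subset[of _ "Pow T"])
      show "finite P" using finite_decomp[OF P psubset.hyps] .
      show "T \<in> ?Q" using psubset.prems by blast
      show "(\<Sum>U\<in>?Q. a_coef F rk U) = (\<Sum>C\<in>P. \<Sum>U\<in>{U\<in>?Q. U \<subseteq> C}. a_coef F rk U)"
        using sum_a_coef_below_decomp[OF psubset.hyps \<open>rk {} = 0\<close> psubset.prems(1) P] part by blast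
    next
      fix C assume "C \<in> P"
      then show "\<not> T \<subseteq> C" using part(1)[of C] Pc psubset.prems(2) by auto
    next
      fix U assume U: "U \<in> ?Q" "U \<noteq> T" "a_coef F rk U \<noteq> 0"
      then have "U \<subset> T" "U \<noteq> {}" by auto
      moreover have "connected_matroid U rk" using psubset.IH U \<open>U \<subset> T\<close> by blast
      ultimately show "card {C\<in>P. U \<subseteq> C} = 1"
        using decomp_connected_subset_unique[OF P psubset.hyps \<open>rk {} = 0\<close>] by blast
    qed
  qed
qed

lemma dual_coef_eq_0_if_contr_not_connected:
  assumes m: "matroid E rk" and cE: "connected_matroid E rk"
    and H: "H \<subseteq> Pow E" and H_conn: "\<And>S. S \<in> H \<Longrightarrow> connected_matroid S rk"
    and H_up: "\<And>S T. S \<in> H \<Longrightarrow> S \<subseteq> T \<Longrightarrow> T \<subseteq> E \<Longrightarrow> connected_matroid T rk \<Longrightarrow> T \<in> H"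
    and "S \<in> H" "\<not> connected_matroid (E - S) (contr_rk rk S)"
  shows "dual_coef E rk H S = 0"
  using assms(6,7)
proof (induction "card (E - S)" arbitrary: S rule: less_induct)
  case less
  have "finite E" using matroid_finite[OF m] .
  have "S \<subseteq> E" "connected_matroid S rk" using less.prems H H_conn by auto
  have "E - S \<noteq> {}" using less.prems(2) connected_matroid_empty by force
  then obtain P where P: "direct_sum_decomp (E - S) (contr_rk rk S) P"
    and Pc: "\<forall>D\<in>P. connected_matroid D (contr_rk rk S)"
    using connected_decomp_exists \<open>finite E\<close> by blast
  have part: "D \<subseteq> E - S" "separator (E - S) (contr_rk rk S) D" if "D \<in> P" for D
    using decomp_part[OF P that] decomp_separator[OF P _ _ that] \<open>finite E\<close> by auto
  have complement_in_H: "E - D \<in> H" if "D \<in> P" for D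
  proof (rule H_up[OF less.prems(1)])
    show "connected_matroid (E - D) rk"
      using connected_complement_of_contr_separator[OF m cE \<open>S \<subseteq> E\<close> \<open>connected_matroid S rk\<close>]
        part[OF that] by blast
  qed (use part[OF that] \<open>S \<subseteq> E\<close> in auto)
  let ?u = "dual_coef E rk H" and ?Q = "{U\<in>H. S \<subseteq> U}"
  show ?case
  proof (rule sum_over_parts_vanishes_at_top[where Q = ?Q and P = P and R = "\<lambda>U D. E - D \<subseteq> U"])
    show "finite ?Q" using H \<open>finite E\<close> by (auto intro: finite_subset[of _ "Pow E"])
    show "finite P" using finite_decomp[OF P] \<open>finite E\<close> by simp
    show "S \<in> ?Q" using less.prems by blast
    have "(\<Sum>U\<in>?Q. ?u U) = int (rk E) - int (rk S)"
      using sum_dual_coef_above[OF \<open>finite E\<close> H less.prems(1)] .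
    also have "\<dots> = (\<Sum>D\<in>P. int (rk E) - int (rk (E - D)))"
      by (rule contr_decomp_rank_sum[OF m \<open>S \<subseteq> E\<close> P])
    also have "\<dots> = (\<Sum>D\<in>P. \<Sum>U\<in>{U\<in>?Q. E - D \<subseteq> U}. ?u U)"
    proof (rule sum.cong[OF refl])
      fix D assume "D \<in> P"
      have "{U\<in>?Q. E - D \<subseteq> U} = {U\<in>H. E - D \<subseteq> U}"
        using part(1)[OF \<open>D \<in> P\<close>] \<open>S \<subseteq> E\<close> by auto
      then show "int (rk E) - int (rk (E - D)) = (\<Sum>U\<in>{U\<in>?Q. E - D \<subseteq> U}. ?u U)"
        using sum_dual_coef_above[OF \<open>finite E\<close> H complement_in_H[OF \<open>D \<in> P\<close>]] by simp
    qed
    finally show "(\<Sum>U\<in>?Q. ?u U) = (\<Sum>D\<in>P. \<Sum>U\<in>{U\<in>?Q. E - D \<subseteq> U}. ?u U)" .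
  next
    fix D assume "D \<in> P"
    show "\<not> E - D \<subseteq> S"
    proof
      assume "E - D \<subseteq> S"
      then have "D = E - S" using part(1)[OF \<open>D \<in> P\<close>] by blast
      then show False using Pc \<open>D \<in> P\<close> less.prems(2) by blast
    qed
  next
    fix U assume U: "U \<in> ?Q" "U \<noteq> S" "?u U \<noteq> 0"
    then have "U \<subseteq> E" "S \<subset> U" using H by auto
    have "U \<noteq> E" using U(3) dual_coef_top[OF \<open>finite E\<close>] by blast
    have "card (E - U) < card (E - S)"
      using \<open>finite E\<close> \<open>U \<subseteq> E\<close> \<open>S \<subset> U\<close> by (intro psubset_card_mono) auto
    then have "connected_matroid (E - U) (contr_rk rk U)" using less.hyps U by blast
    then show "card {D\<in>P. E - D \<subseteq> U} = 1"
      using contr_decomp_connected_unique[OF m _ \<open>U \<subseteq> E\<close> \<open>U \<noteq> E\<close> P] \<open>S \<subset> U\<close> by blast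
  qed
qed

lemma ec_on_connected_members:
  assumes m: "matroid E rk" and F: "F \<subseteq> Pow E"
    and closed: "\<And>S C. S \<in> F \<Longrightarrow> component S rk C \<Longrightarrow> C \<in> F"
  shows "ec_on E rk {S\<in>F. connected_matroid S rk} = ec_on E rk F"
proof -
  let ?G = "{S\<in>F. connected_matroid S rk}" and ?D = "{S\<in>F. \<not> connected_matroid S rk}"
  have "ec_on E rk (?G \<union> ?D) = ec_on E rk ?G"
  proof (rule ec_on_Un_eq)
    show "finite E" "rk {} = 0" using matroid_finite[OF m] matroid_rank_empty[OF m] .
    show "?G \<subseteq> Pow E" "?D \<subseteq> Pow E" "?G \<inter> ?D = {}" using F by auto
    fix D' X assume "D' \<subseteq> ?D" "X \<in> ?D - D'"
    let ?F' = "insert X (?G \<union> D')"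
    have "a_coef (?G \<union> D') rk X = a_coef ?F' rk X"
      by (rule a_coef_cong) auto
    also have "\<dots> = 0"
    proof (rule a_coef_eq_0_if_not_connected[OF m])
      show "?F' \<subseteq> Pow E" "X \<in> ?F'" "\<not> connected_matroid X rk"
        using F \<open>D' \<subseteq> ?D\<close> \<open>X \<in> ?D - D'\<close> by auto
      fix S C assume "S \<in> ?F'" "component S rk C"
      moreover have "S \<in> F" using \<open>S \<in> ?F'\<close> \<open>D' \<subseteq> ?D\<close> \<open>X \<in> ?D - D'\<close> by blast
      ultimately show "C \<in> ?F'" using closed component_connected by blast
    qed
    finally show "a_coef (?G \<union> D') rk X * dual_coef E rk (?G \<union> D') X = 0" by simp
  qed
  moreover have "?G \<union> ?D = F" by blast
  ultimately show ?thesis by simp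
qed

lemma ec_on_add_level:
  assumes m: "matroid E rk" and cE: "connected_matroid E rk"
    and F: "F \<subseteq> Pow E" "\<And>S. S \<in> F \<Longrightarrow> connected_matroid S rk"
    and large: "\<And>S. S \<subseteq> E \<Longrightarrow> connected_matroid S rk \<Longrightarrow> n < card S \<Longrightarrow> S \<in> F"
    and Y: "Y \<subseteq> {S\<in>Pow E. connected_matroid S rk \<and> card S = n
                  \<and> \<not> connected_matroid (E - S) (contr_rk rk S)}"
    and "F \<inter> Y = {}"
  shows "ec_on E rk (F \<union> Y) = ec_on E rk F"
proof (rule ec_on_Un_eq[of E rk])
  show "finite E" "rk {} = 0" using matroid_finite[OF m] matroid_rank_empty[OF m] .
  show "F \<subseteq> Pow E" "Y \<subseteq> Pow E" "F \<inter> Y = {}" using F(1) Y \<open>F \<inter> Y = {}\<close> by auto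
  fix D' X assume D': "D' \<subseteq> Y" and X: "X \<in> Y - D'"
  then have "X \<subseteq> E" "connected_matroid X rk" "card X = n"
    and contr_X: "\<not> connected_matroid (E - X) (contr_rk rk X)" using Y by auto
  define H where "H = {T\<in>Pow E. connected_matroid T rk \<and> X \<subseteq> T}"
  \<comment> \<open>all connected proper supersets of X are already in F\<close>
  have "dual_coef E rk (F \<union> D') X = dual_coef E rk H X"
  proof (rule dual_coef_cong[OF \<open>finite E\<close>])
    fix T assume "X \<subset> T" "T \<subseteq> E"
    then have "n < card T"
      using \<open>finite E\<close> \<open>card X = n\<close> by (metis psubset_card_mono rev_finite_subset)
    have "connected_matroid T rk" if "T \<in> F \<union> D'" using that D' Y F(2) by blast
    then show "T \<in> F \<union> D' \<longleftrightarrow> T \<in> H"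
      using large \<open>X \<subset> T\<close> \<open>T \<subseteq> E\<close> \<open>n < card T\<close> unfolding H_def by blast
  qed
  also have "\<dots> = 0"
  proof (rule dual_coef_eq_0_if_contr_not_connected[OF m cE])
    show "H \<subseteq> Pow E" "X \<in> H" unfolding H_def using \<open>X \<subseteq> E\<close> \<open>connected_matroid X rk\<close> by auto
  qed (use contr_X in \<open>auto simp: H_def\<close>)
  finally show "a_coef (F \<union> D') rk X * dual_coef E rk (F \<union> D') X = 0" by simp
qed

lemma ec_on_add_connected:
  assumes m: "matroid E rk" and cE: "connected_matroid E rk" and SS: "SS \<subseteq> Pow E"
    and contains: "\<And>S. S \<subseteq> E \<Longrightarrow> connected_matroid S rk \<Longrightarrow>
           connected_matroid (E - S) (contr_rk rk S) \<Longrightarrow> S \<in> SS"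
  shows "ec_on E rk {S\<in>SS. connected_matroid S rk} = ec_on E rk {S\<in>Pow E. connected_matroid S rk}"
proof -
  define L where
    "L n = {S\<in>SS. connected_matroid S rk} \<union> {S\<in>Pow E. connected_matroid S rk \<and> n \<le> card S}" for n
  have L_step: "ec_on E rk (L n) = ec_on E rk (L (Suc n))" for n
  proof -
    let ?Y = "{S\<in>Pow E. connected_matroid S rk \<and> card S = n \<and> S \<notin> SS}"
    have "ec_on E rk (L (Suc n) \<union> ?Y) = ec_on E rk (L (Suc n))"
    proof (rule ec_on_add_level[OF m cE])
      show "L (Suc n) \<subseteq> Pow E" "L (Suc n) \<inter> ?Y = {}" using SS unfolding L_def by auto
      show "connected_matroid S rk" if "S \<in> L (Suc n)" for S using that unfolding L_def by blast
      show "S \<in> L (Suc n)" if "S \<subseteq> E" "connected_matroid S rk" "n < card S" for S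
        using that unfolding L_def by auto
      show "?Y \<subseteq> {S\<in>Pow E. connected_matroid S rk \<and> card S = n
                  \<and> \<not> connected_matroid (E - S) (contr_rk rk S)}"
        using contains by blast
    qed
    moreover have "L (Suc n) \<union> ?Y = L n" unfolding L_def by auto
    ultimately show ?thesis by simp
  qed
  have L_const: "ec_on E rk (L k) = ec_on E rk (L 0)" for k
    by (induction k) (simp_all add: L_step[symmetric])
  have "L 0 = {S\<in>Pow E. connected_matroid S rk}" using SS unfolding L_def by auto
  moreover have none_large: "{S\<in>Pow E. connected_matroid S rk \<and> Suc (card E) \<le> card S} = {}"
    using card_mono[OF matroid_finite[OF m]] not_less_eq_eq by auto
  then have "L (Suc (card E)) = {S\<in>SS. connected_matroid S rk}" unfolding L_def none_large by simp
  ultimately show ?thesis using L_const[of "Suc (card E)"] by simp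
qed

theorem theorem6p7:
  fixes E :: "'a set" and rk :: "'a set \<Rightarrow> nat" and SS :: "'a set set"
  assumes "matroid E rk"
    and "connected_matroid E rk"
    and "SS \<subseteq> Pow E"
    and "\<And>S. S \<subseteq> E \<Longrightarrow> connected_matroid S rk \<Longrightarrow>
           connected_matroid (E - S) (contr_rk rk S) \<Longrightarrow> S \<in> SS"
    and "\<And>S C. S \<in> SS \<Longrightarrow> component S rk C \<Longrightarrow> C \<in> SS"
  shows "ec_on E rk SS = ec E rk"
proof -
  have "ec_on E rk SS = ec_on E rk {S\<in>SS. connected_matroid S rk}"
    using ec_on_connected_members[OF assms(1,3,5)] by simp
  also have "\<dots> = ec_on E rk {S\<in>Pow E. connected_matroid S rk}"
    using ec_on_add_connected[OF assms(1-4)] .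
  also have "\<dots> = ec_on E rk (Pow E)"
    by (rule ec_on_connected_members[OF assms(1) subset_refl]) (use component_subset in blast)
  finally show ?thesis unfolding ec_def .
qed

end
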